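(* Let $B$ be any group. Suppose $w\in (B\wr C_2)'$ is given by the wreath recursion $w=(r_1,\ r_1^{-1}[f,g])$ with $r_1,f,g\in B$. Put $a_{2,1}=(f^{-1})^{r_1^{-1}}$, $a_{2,2}=r_1a_{2,1}$, $a_{1,2}=g^{a_{2,2}^{-1}}$. Then $w=[(e,a_{1,2})\sigma,\ (a_{2,1},a_{2,2})]$.
   Context: $C_2=\langle\sigma\rangle$, $\sigma=(1,2)$ acting on $\{1,2\}$. Elements of $B\wr C_2=B^2\rtimes C_2$ are written $(b_1,b_2)\tau$, with multiplication $(g_1,g_2)\tau\cdot(h_1,h_2)\rho=(g_1h_{\tau(1)},g_2h_{\tau(2)})\tau\rho$; $(b_1,b_2)$ denotes an element with trivial $C_2$-part. Conventions: $[a,b]=aba^{-1}b^{-1}$ and $a^b=bab^{-1}$. *)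

theory Defs
  imports "HOL-Algebra.Algebra"
begin

text \<open>An element (b1,b2)tau is encoded as
  ((b1,b2), t) where t = True means tau = sigma = (1,2) and t = False means tau = id.\<close>

definition wreath_C2 :: "('a, 'b) monoid_scheme \<Rightarrow> (('a \<times> 'a) \<times> bool) monoid" where
  "wreath_C2 B = \<lparr> carrier = (carrier B \<times> carrier B) \<times> UNIV,
     monoid.mult = (\<lambda>((g1, g2), t) ((h1, h2), r).
               ((g1 \<otimes>\<^bsub>B\<^esub> (if t then h2 else h1), g2 \<otimes>\<^bsub>B\<^esub> (if t then h1 else h2)), t \<noteq> r)),
     one = ((\<one>\<^bsub>B\<^esub>, \<one>\<^bsub>B\<^esub>), False) \<rparr>"

text \<open>Commutator [a,b] = a b a^-1 b^-1 and conjugation a^b = b a b^-1 (paper's conventions).\<close>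

definition commutator :: "('a, 'b) monoid_scheme \<Rightarrow> 'a \<Rightarrow> 'a \<Rightarrow> 'a" where
  "commutator G a b = a \<otimes>\<^bsub>G\<^esub> b \<otimes>\<^bsub>G\<^esub> inv\<^bsub>G\<^esub> a \<otimes>\<^bsub>G\<^esub> inv\<^bsub>G\<^esub> b"

definition conjugate :: "('a, 'b) monoid_scheme \<Rightarrow> 'a \<Rightarrow> 'a \<Rightarrow> 'a" where
  "conjugate G a b = b \<otimes>\<^bsub>G\<^esub> a \<otimes>\<^bsub>G\<^esub> inv\<^bsub>G\<^esub> b"

end

theory Submission
  imports Defs
begin

text \<open>Commuting the swap (d, c)\<sigma> with a base element (x1, x2) gives a base element whose
  coordinates are explicit; with d = 1 the coordinates are x2 x1^-1 and x1^c x2^-1.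
  Solving x2 x1^-1 = r1 and x1^c x2^-1 = r1^-1 [f, g] in B leads to the stated
  a21, a22 and a12.\<close>

lemma (in group) mult_inv_cancel_left [simp]:
  "x \<in> carrier G \<Longrightarrow> y \<in> carrier G \<Longrightarrow> x \<otimes> (inv x \<otimes> y) = y"
  by (simp add: m_assoc[symmetric])

lemma (in group) inv_mult_cancel_left [simp]:
  "x \<in> carrier G \<Longrightarrow> y \<in> carrier G \<Longrightarrow> inv x \<otimes> (x \<otimes> y) = y"
  by (simp add: m_assoc[symmetric])

lemma (in group) wreath_C2_group: "group (wreath_C2 G)"
proof (rule groupI)
  fix x
  assume "x \<in> carrier (wreath_C2 G)"
  then obtain x1 x2 t where x: "x = ((x1, x2), t)" "x1 \<in> carrier G" "x2 \<in> carrier G"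
    by (auto simp: wreath_C2_def)
  show "\<exists>y \<in> carrier (wreath_C2 G). y \<otimes>\<^bsub>wreath_C2 G\<^esub> x = \<one>\<^bsub>wreath_C2 G\<^esub>"
    using x by (intro bexI[of _ "if t then ((inv x2, inv x1), t) else ((inv x1, inv x2), t)"])
      (auto simp: wreath_C2_def)
qed (auto simp: wreath_C2_def m_assoc split: if_splits)

lemma (in group) wreath_C2_inv:
  assumes "x1 \<in> carrier G" "x2 \<in> carrier G"
  shows "inv\<^bsub>wreath_C2 G\<^esub> ((x1, x2), t) =
     (if t then ((inv x2, inv x1), True) else ((inv x1, inv x2), False))"
proof -
  interpret W: group "wreath_C2 G" by (rule wreath_C2_group)
  show ?thesis
    by (rule W.inv_equality) (use assms in \<open>auto simp: wreath_C2_def\<close>)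
qed

lemma (in group) wreath_C2_commutator_swap_base:
  assumes "d \<in> carrier G" "c \<in> carrier G" "x1 \<in> carrier G" "x2 \<in> carrier G"
  shows "commutator (wreath_C2 G) ((d, c), True) ((x1, x2), False) =
    ((conjugate G x2 d \<otimes> inv x1, conjugate G x1 c \<otimes> inv x2), False)"
  using assms
  by (simp add: commutator_def wreath_C2_inv)
    (simp add: wreath_C2_def conjugate_def m_assoc)

lemma (in group) commutator_recursion_solution:
  assumes "r \<in> carrier G" "f \<in> carrier G" "g \<in> carrier G"
    and a21: "a21 = conjugate G (inv f) (inv r)"
    and a22: "a22 = r \<otimes> a21"
    and a12: "a12 = conjugate G g (inv a22)"
  shows "a22 \<otimes> inv a21 = r"
    and "conjugate G a21 a12 \<otimes> inv a22 = inv r \<otimes> commutator G f g"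
proof -
  have a21': "a21 = inv r \<otimes> inv f \<otimes> r"
    using assms by (simp add: conjugate_def)
  have a22': "a22 = inv f \<otimes> r"
    using assms(1,2) by (simp add: a22 a21' m_assoc[symmetric])
  have a12': "a12 = inv r \<otimes> f \<otimes> g \<otimes> inv f \<otimes> r"
    using assms(1-3) by (simp add: a12 a22' conjugate_def inv_mult_group m_assoc)
  show "a22 \<otimes> inv a21 = r"
    using assms(1,2) by (simp add: a22' a21' inv_mult_group m_assoc)
  show "conjugate G a21 a12 \<otimes> inv a22 = inv r \<otimes> commutator G f g"
    using assms(1-3)
    by (simp add: a12' a21' a22' conjugate_def commutator_def inv_mult_group m_assoc)
qed

theorem mainTheorem4:
  fixes B :: "('a, 'b) monoid_scheme" and r1 f g :: 'a
  assumes "group B"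
    and "r1 \<in> carrier B" and "f \<in> carrier B" and "g \<in> carrier B"
    and "w = ((r1, inv\<^bsub>B\<^esub> r1 \<otimes>\<^bsub>B\<^esub> commutator B f g), False)"
    and "w \<in> derived (wreath_C2 B) (carrier (wreath_C2 B))"
    and "a21 = conjugate B (inv\<^bsub>B\<^esub> f) (inv\<^bsub>B\<^esub> r1)"
    and "a22 = r1 \<otimes>\<^bsub>B\<^esub> a21"
    and "a12 = conjugate B g (inv\<^bsub>B\<^esub> a22)"
  shows "w = commutator (wreath_C2 B) ((\<one>\<^bsub>B\<^esub>, a12), True) ((a21, a22), False)"
proof -
  interpret group B by fact
  have carrier: "a21 \<in> carrier B" "a22 \<in> carrier B" "a12 \<in> carrier B"
    using assms(2-4,7-9) by (auto simp: conjugate_def)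
  have "commutator (wreath_C2 B) ((\<one>\<^bsub>B\<^esub>, a12), True) ((a21, a22), False) =
      ((a22 \<otimes>\<^bsub>B\<^esub> inv\<^bsub>B\<^esub> a21, conjugate B a21 a12 \<otimes>\<^bsub>B\<^esub> inv\<^bsub>B\<^esub> a22), False)"
    using wreath_C2_commutator_swap_base[OF one_closed carrier(3,1,2)]
    by (simp add: conjugate_def carrier)
  also have "\<dots> = w"
    using commutator_recursion_solution[OF assms(2-4,7-9)] assms(5) by simp
  finally show ?thesis by simp
qed

end
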